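(* Let $\mathrm{M}$ be a (loopless) matroid of rank $d+1$. For every $J\subseteq[d]$, $N_J(\mathrm{U}_{d+1})\le N_J(\mathrm{M})$.
   Context: $\mathrm{U}_{d+1}$ is the Boolean matroid on $d+1$ elements. For $J=\{j_1<\cdots<j_m\}\subseteq[d]=\{1,\dots,d\}$, $N_J(\mathrm{M})$ is the number of chains of flats $G_1\subsetneq\cdots\subsetneq G_m$ of $\mathrm{M}$ with $\operatorname{rk}(G_\ell)=j_\ell$ for all $\ell$. *)

theory Defs
  imports Main
begin

definition matroid :: "'a set \<Rightarrow> ('a set \<Rightarrow> bool) \<Rightarrow> bool" where
  "matroid E indep \<longleftrightarrow>
     finite E \<and>
     (\<forall>I. indep I \<longrightarrow> I \<subseteq> E) \<and>
     indep {} \<and>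
     (\<forall>I J. indep J \<and> I \<subseteq> J \<longrightarrow> indep I) \<and>
     (\<forall>I J. indep I \<and> indep J \<and> card I < card J \<longrightarrow>
        (\<exists>x\<in>J - I. indep (insert x I)))"

definition loopless :: "'a set \<Rightarrow> ('a set \<Rightarrow> bool) \<Rightarrow> bool" where
  "loopless E indep \<longleftrightarrow> (\<forall>x\<in>E. indep {x})"

definition mrank :: "('a set \<Rightarrow> bool) \<Rightarrow> 'a set \<Rightarrow> nat" where
  "mrank indep X = Max {card I | I. I \<subseteq> X \<and> indep I}"

definition flat :: "'a set \<Rightarrow> ('a set \<Rightarrow> bool) \<Rightarrow> 'a set \<Rightarrow> bool" where
  "flat E indep F \<longleftrightarrow> F \<subseteq> E \<and>
     (\<forall>x\<in>E - F. mrank indep (insert x F) > mrank indep F)"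

text \<open>N_J(M): number of chains of flats G_{j_1} \<subset> ... \<subset> G_{j_m} with rk G_j = j,
  encoded as functions indexed by J (value {} outside J).\<close>
definition chains_J :: "'a set \<Rightarrow> ('a set \<Rightarrow> bool) \<Rightarrow> nat set \<Rightarrow> (nat \<Rightarrow> 'a set) set" where
  "chains_J E indep J = {G.
     (\<forall>j\<in>J. flat E indep (G j) \<and> mrank indep (G j) = j) \<and>
     (\<forall>j\<in>J. \<forall>k\<in>J. j < k \<longrightarrow> G j \<subset> G k) \<and>
     (\<forall>j. j \<notin> J \<longrightarrow> G j = {})}"

definition N_J :: "'a set \<Rightarrow> ('a set \<Rightarrow> bool) \<Rightarrow> nat set \<Rightarrow> nat" where
  "N_J E indep J = card (chains_J E indep J)"

definition boolean_indep :: "nat \<Rightarrow> nat set \<Rightarrow> bool" where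
  "boolean_indep d I \<longleftrightarrow> I \<subseteq> {0..d}"

end

theory Submission
  imports Defs "HOL-Library.FuncSet"
begin

text \<open>Fix a basis \<open>B\<close> of \<open>M\<close> and identify it with \<open>{0..d}\<close>. Sending a subset \<open>S \<subseteq> B\<close>
  to its closure \<open>cl S\<close> (the elements spanned by \<open>S\<close>) gives a flat of rank \<open>|S|\<close>, and since
  every subset of \<open>B\<close> is independent, \<open>cl\<close> is injective and monotone on subsets of \<open>B\<close>.
  Thus the Boolean lattice of \<open>B\<close> embeds rank-preservingly into the lattice of flats of \<open>M\<close>,
  and applying the embedding pointwise maps chains of \<open>U\<^sub>d\<^sub>+\<^sub>1\<close> injectively to chains of \<open>M\<close>
  with the same ranks.\<close>

lemma indep_subset_ground: "matroid E indep \<Longrightarrow> indep I \<Longrightarrow> I \<subseteq> E"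
  unfolding matroid_def by blast

lemma indep_subset: "matroid E indep \<Longrightarrow> indep J \<Longrightarrow> I \<subseteq> J \<Longrightarrow> indep I"
  unfolding matroid_def by blast

lemma indep_augment:
  "matroid E indep \<Longrightarrow> indep I \<Longrightarrow> indep J \<Longrightarrow> card I < card J \<Longrightarrow> \<exists>x\<in>J - I. indep (insert x I)"
  unfolding matroid_def by blast

lemma indep_finite: "matroid E indep \<Longrightarrow> indep I \<Longrightarrow> finite I"
  unfolding matroid_def by (meson finite_subset)

lemma finite_indep_cards:
  assumes "matroid E indep"
  shows "finite {card I | I. I \<subseteq> X \<and> indep I}"
proof -
  have "finite E" using assms unfolding matroid_def by blast
  then have "{card I | I. I \<subseteq> X \<and> indep I} \<subseteq> {0..card E}"
    using indep_subset_ground[OF assms] card_mono by fastforce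
  then show ?thesis using finite_subset by blast
qed

lemma card_le_mrank:
  assumes "matroid E indep" "indep I" "I \<subseteq> X"
  shows "card I \<le> mrank indep X"
  unfolding mrank_def using finite_indep_cards[OF assms(1)] assms(2,3)
  by (intro Max_ge) auto

lemma mrank_le:
  assumes "matroid E indep" "\<And>I. indep I \<Longrightarrow> I \<subseteq> X \<Longrightarrow> card I \<le> k"
  shows "mrank indep X \<le> k"
proof -
  have "indep {}" using assms(1) unfolding matroid_def by blast
  then show ?thesis unfolding mrank_def using finite_indep_cards[OF assms(1)] assms(2)
    by (intro Max.boundedI) auto
qed

lemma ex_indep_card_mrank:
  assumes "matroid E indep"
  obtains I where "I \<subseteq> X" "indep I" "card I = mrank indep X"
proof -
  have "indep {}" using assms unfolding matroid_def by blast
  then have "mrank indep X \<in> {card I | I. I \<subseteq> X \<and> indep I}"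
    unfolding mrank_def using finite_indep_cards[OF assms] by (intro Max_in) auto
  then show thesis using that by auto
qed

lemma mrank_boolean: "X \<subseteq> {0..d} \<Longrightarrow> mrank (boolean_indep d) X = card X"
  unfolding mrank_def boolean_indep_def
  by (rule Max_eqI) (auto intro: card_mono finite_subset[of _ "{0..d}"])

text \<open>This is the matroid closure only when \<open>S\<close> is independent, the only case used.\<close>
definition mclosure :: "'a set \<Rightarrow> ('a set \<Rightarrow> bool) \<Rightarrow> 'a set \<Rightarrow> 'a set" where
  "mclosure E indep S = {x \<in> E. x \<in> S \<or> \<not> indep (insert x S)}"

lemma mrank_mclosure:
  assumes "matroid E indep" "indep S"
  shows "mrank indep (mclosure E indep S) = card S"
proof (rule antisym)
  show "card S \<le> mrank indep (mclosure E indep S)"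
    using assms indep_subset_ground[OF assms] by (intro card_le_mrank) (auto simp: mclosure_def)
  show "mrank indep (mclosure E indep S) \<le> card S"
  proof (rule mrank_le[OF assms(1)])
    fix I assume I: "indep I" "I \<subseteq> mclosure E indep S"
    show "card I \<le> card S"
    proof (rule ccontr)
      assume "\<not> card I \<le> card S"
      then obtain x where "x \<in> I - S" "indep (insert x S)"
        using indep_augment[OF assms I(1)] by force
      then show False using I(2) by (auto simp: mclosure_def)
    qed
  qed
qed

lemma flat_mclosure:
  assumes "matroid E indep" "indep S"
  shows "flat E indep (mclosure E indep S)"
  unfolding flat_def
proof (intro conjI ballI)
  show "mclosure E indep S \<subseteq> E" by (auto simp: mclosure_def)
  fix x assume "x \<in> E - mclosure E indep S"
  then have "x \<notin> S" "indep (insert x S)" by (auto simp: mclosure_def)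
  then have "card S < card (insert x S)"
    using indep_finite[OF assms] by simp
  also have "\<dots> \<le> mrank indep (insert x (mclosure E indep S))"
    using \<open>indep (insert x S)\<close> indep_subset_ground[OF assms]
    by (intro card_le_mrank[OF assms(1)]) (auto simp: mclosure_def)
  finally show "mrank indep (mclosure E indep S) < mrank indep (insert x (mclosure E indep S))"
    using mrank_mclosure[OF assms] by simp
qed

lemma mclosure_mono:
  assumes "matroid E indep" "S \<subseteq> T" "indep T"
  shows "mclosure E indep S \<subseteq> mclosure E indep T"
  unfolding mclosure_def using assms indep_subset[OF assms(1)]
  by auto (meson insert_mono)

lemma inj_on_mclosure:
  assumes "matroid E indep" "indep B"
  shows "inj_on (mclosure E indep) (Pow B)"
proof -
  have sub: "S \<subseteq> T" if "S \<subseteq> B" "T \<subseteq> B" "mclosure E indep S = mclosure E indep T" for S T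
  proof
    fix x assume "x \<in> S"
    then have "x \<in> mclosure E indep T" using that indep_subset_ground[OF assms]
      by (auto simp: mclosure_def[of E indep S])
    moreover have "indep (insert x T)"
      using \<open>x \<in> S\<close> that by (intro indep_subset[OF assms]) auto
    ultimately show "x \<in> T" by (auto simp: mclosure_def)
  qed
  show ?thesis
    by (rule inj_onI) (metis PowD sub subset_antisym)
qed

lemma finite_chains_J:
  assumes "finite E" "finite J"
  shows "finite (chains_J E indep J)"
proof -
  let ?extend = "\<lambda>f j. if j \<in> J then f j else {}"
  have "G \<in> ?extend ` (J \<rightarrow>\<^sub>E Pow E)" if G: "G \<in> chains_J E indep J" for G
  proof
    show "G = ?extend (restrict G J)"
      using G unfolding chains_J_def by (intro ext) auto
    show "restrict G J \<in> J \<rightarrow>\<^sub>E Pow E"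
      using G by (auto simp: chains_J_def flat_def)
  qed
  then have "chains_J E indep J \<subseteq> ?extend ` (J \<rightarrow>\<^sub>E Pow E)"
    by blast
  moreover have "finite (J \<rightarrow>\<^sub>E Pow E)" using assms by (intro finite_PiE) auto
  ultimately show ?thesis using finite_subset by blast
qed

lemma chains_J_booleanD:
  assumes "G \<in> chains_J {0..d} (boolean_indep d) J" "j \<in> J"
  shows "G j \<subseteq> {0..d}" "card (G j) = j"
  using assms mrank_boolean[of "G j" d] by (auto simp: chains_J_def flat_def)

lemma N_J_boolean_le_of_embedding:
  assumes fin: "finite (chains_J E indep J)"
    and flat: "\<And>X. X \<subseteq> {0..d} \<Longrightarrow> flat E indep (\<phi> X) \<and> mrank indep (\<phi> X) = card X"
    and mono: "\<And>X Y. X \<subseteq> Y \<Longrightarrow> Y \<subseteq> {0..d} \<Longrightarrow> \<phi> X \<subseteq> \<phi> Y"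
    and inj: "inj_on \<phi> (Pow {0..d})"
  shows "N_J {0..d} (boolean_indep d) J \<le> N_J E indep J"
proof -
  let ?C = "chains_J {0..d} (boolean_indep d) J"
  define \<Phi> where "\<Phi> G = (\<lambda>j. if j \<in> J then \<phi> (G j) else {})" for G
  have "inj_on \<Phi> ?C"
  proof (rule inj_onI)
    fix G G' assume G: "G \<in> ?C" and G': "G' \<in> ?C" and eq: "\<Phi> G = \<Phi> G'"
    have "G j = G' j" if "j \<in> J" for j
    proof (rule inj_onD[OF inj])
      show "\<phi> (G j) = \<phi> (G' j)" using that fun_cong[OF eq, of j] by (simp add: \<Phi>_def)
    qed (use chains_J_booleanD(1)[OF G that] chains_J_booleanD(1)[OF G' that] in auto)
    moreover have "G j = G' j" if "j \<notin> J" for j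
      using that G G' by (auto simp: chains_J_def)
    ultimately show "G = G'" by blast
  qed
  moreover have "\<Phi> G \<in> chains_J E indep J" if G: "G \<in> ?C" for G
    unfolding chains_J_def
  proof (intro CollectI conjI ballI allI impI)
    fix j assume "j \<in> J"
    then show "flat E indep (\<Phi> G j)" "mrank indep (\<Phi> G j) = j"
      using flat chains_J_booleanD[OF G] by (auto simp: \<Phi>_def)
  next
    fix j k assume j: "j \<in> J" and k: "k \<in> J" and "j < k"
    then have "G j \<subset> G k" using G by (auto simp: chains_J_def)
    moreover have "G k \<subseteq> {0..d}" using chains_J_booleanD(1)[OF G k] .
    ultimately have "\<phi> (G j) \<subseteq> \<phi> (G k)" "\<phi> (G j) \<noteq> \<phi> (G k)"
      using mono inj_onD[OF inj, of "G j" "G k"] by auto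
    then show "\<Phi> G j \<subset> \<Phi> G k" using j k by (auto simp: \<Phi>_def)
  qed (simp add: \<Phi>_def)
  ultimately have "card ?C \<le> card (chains_J E indep J)"
    using fin by (intro card_inj_on_le) auto
  then show ?thesis by (simp add: N_J_def)
qed

lemma N_J_boolean_le_of_indep:
  assumes M: "matroid E indep" and B: "indep B" "card B = d + 1" and "finite J"
  shows "N_J {0..d} (boolean_indep d) J \<le> N_J E indep J"
proof -
  obtain h where "bij_betw h {0..d} B"
    using finite_same_card_bij[of "{0..d}" B] indep_finite[OF M B(1)] B(2) by auto
  then have h_inj: "inj_on h {0..d}" and h_image: "h ` {0..d} = B"
    by (auto simp: bij_betw_def)
  have indep_image: "indep (h ` X)" if "X \<subseteq> {0..d}" for X
    using that h_image by (intro indep_subset[OF M B(1)]) auto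
  show ?thesis
  proof (rule N_J_boolean_le_of_embedding[where \<phi> = "\<lambda>X. mclosure E indep (h ` X)"])
    show "finite (chains_J E indep J)"
      using M \<open>finite J\<close> by (intro finite_chains_J) (auto simp: matroid_def)
    show "flat E indep (mclosure E indep (h ` X)) \<and> mrank indep (mclosure E indep (h ` X)) = card X"
      if "X \<subseteq> {0..d}" for X
      using that flat_mclosure[OF M] mrank_mclosure[OF M] indep_image h_inj
      by (simp add: card_image inj_on_subset)
    show "mclosure E indep (h ` X) \<subseteq> mclosure E indep (h ` Y)" if "X \<subseteq> Y" "Y \<subseteq> {0..d}" for X Y
      using that by (intro mclosure_mono[OF M] indep_image) auto
    have "image h ` Pow {0..d} \<subseteq> Pow B"
      using h_image by auto
    then show "inj_on (\<lambda>X. mclosure E indep (h ` X)) (Pow {0..d})"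
      using comp_inj_on[OF inj_on_image_Pow[OF h_inj] inj_on_subset[OF inj_on_mclosure[OF M B(1)]]]
      by (simp add: comp_def)
  qed
qed

theorem lemma4p13:
  fixes E :: "'a set" and indep :: "'a set \<Rightarrow> bool" and d :: nat and J :: "nat set"
  assumes "matroid E indep"
    and "loopless E indep"
    and "mrank indep E = d + 1"
    and "J \<subseteq> {1..d}"
  shows "N_J {0..d} (boolean_indep d) J \<le> N_J E indep J"
proof -
  obtain B where "indep B" "card B = d + 1"
    using ex_indep_card_mrank[OF assms(1), of E] assms(3) by metis
  moreover have "finite J"
    using assms(4) finite_subset by blast
  ultimately show ?thesis
    using N_J_boolean_le_of_indep[OF assms(1)] by blast
qed

end
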